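(* Let $G$ be a graph on $[n]$ and $p$ in the Shearer region $\mathcal S$ of $G$. Then for every $S\subseteq[n]$, $$\sum_{J\subseteq S}\frac{q_J(p)}{q_\emptyset(p)}\le\prod_{j\in S}\Big(1+\frac{q_{\{j\}}(p)}{q_\emptyset(p)}\Big).$$
   Context: Shearer notation: $\mathrm{Ind}$ is the family of independent sets of $G$ (including $\emptyset$); for $p\in\mathbb R^n$ and $I\subseteq[n]$, $p^I=\prod_{i\in I}p_i$. For $S\subseteq[n]$, $q_S(p)=\sum_{I\in\mathrm{Ind},\,S\subseteq I}(-1)^{|I\setminus S|}p^I$ (so $q_S=0$ if $S\notin\mathrm{Ind}$) and $\breve q_S(p)=\sum_{I\in\mathrm{Ind},\,I\subseteq S}(-1)^{|I|}p^I$. The Shearer region is $\mathcal S=\{p\in(0,1)^n:\breve q_S(p)>0\ \forall S\subseteq[n]\}$, which equals $\{p\in(0,1)^n: q_I(p)>0\ \forall I\in\mathrm{Ind}\}$. *)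

theory Defs
  imports Complex_Main
begin

text \<open>A simple graph on the vertex set [n], rendered as {0..<n}, given by a
symmetric irreflexive edge relation E.\<close>

definition graph_on :: "nat \<Rightarrow> (nat \<Rightarrow> nat \<Rightarrow> bool) \<Rightarrow> bool" where
  "graph_on n E \<longleftrightarrow> (\<forall>i j. E i j \<longrightarrow> i < n \<and> j < n) \<and> (\<forall>i j. E i j \<longrightarrow> E j i) \<and> (\<forall>i. \<not> E i i)"

definition indep_sets :: "nat \<Rightarrow> (nat \<Rightarrow> nat \<Rightarrow> bool) \<Rightarrow> nat set set" where
  "indep_sets n E = {I. I \<subseteq> {..<n} \<and> (\<forall>i\<in>I. \<forall>j\<in>I. \<not> E i j)}"

definition q_poly :: "nat \<Rightarrow> (nat \<Rightarrow> nat \<Rightarrow> bool) \<Rightarrow> nat set \<Rightarrow> (nat \<Rightarrow> real) \<Rightarrow> real" where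
  "q_poly n E S p = (\<Sum>I\<in>{I\<in>indep_sets n E. S \<subseteq> I}. (-1) ^ card (I - S) * (\<Prod>i\<in>I. p i))"

definition q_breve :: "nat \<Rightarrow> (nat \<Rightarrow> nat \<Rightarrow> bool) \<Rightarrow> nat set \<Rightarrow> (nat \<Rightarrow> real) \<Rightarrow> real" where
  "q_breve n E S p = (\<Sum>I\<in>{I\<in>indep_sets n E. I \<subseteq> S}. (-1) ^ card I * (\<Prod>i\<in>I. p i))"

text \<open>Shearer region: p in (0,1)^n with breve q_S(p) > 0 for all S subseteq [n].
Coordinates outside [n] are irrelevant; we only constrain those in [n].\<close>
definition shearer_region :: "nat \<Rightarrow> (nat \<Rightarrow> nat \<Rightarrow> bool) \<Rightarrow> (nat \<Rightarrow> real) set" where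
  "shearer_region n E = {p. (\<forall>i<n. 0 < p i \<and> p i < 1) \<and> (\<forall>S. S \<subseteq> {..<n} \<longrightarrow> q_breve n E S p > 0)}"

end

theory Submission
  imports Defs
begin

text \<open>
Write Q(T) for \<open>q_breve n E T p\<close>, N[J] for the closed neighbourhood of J and U = [n].
Sorting the independent subsets of T by whether they contain a vertex v gives
Q(T) = Q(T - v) - p(v) Q(T - N[v]), and for independent J likewise q_J = p^J Q(U - N[J]).
In the Shearer region every Q(T) is positive, so Q is antitone, and an induction on T through
the identity shows that the ratio Q(T + w) / Q(T) is antitone too. Adding the vertices of
B - A one at a time yields Q(A \<inter> B) Q(U) \<le> Q(A) Q(B); with A = U - N[J], B = U - N[k] this
is q_(J+k) q_\<emptyset> \<le> q_J q_k, hence q_J / q_\<emptyset> \<le> \<Prod>_(j\<in>J) q_j / q_\<emptyset>. As q_J = 0 for dependent J,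
summing over J \<subseteq> S and expanding the product on the right gives the theorem.
\<close>

definition closed_nbh :: "(nat \<Rightarrow> nat \<Rightarrow> bool) \<Rightarrow> nat set \<Rightarrow> nat set" where
  "closed_nbh E J = J \<union> {u. \<exists>j\<in>J. E j u}"

lemma indep_sets_subset: "I \<in> indep_sets n E \<Longrightarrow> J \<subseteq> I \<Longrightarrow> J \<in> indep_sets n E"
  unfolding indep_sets_def by blast

lemma indep_sets_finite: "I \<in> indep_sets n E \<Longrightarrow> finite I"
  unfolding indep_sets_def using finite_subset by blast

lemma q_poly_not_indep:
  assumes "J \<notin> indep_sets n E"
  shows "q_poly n E J p = 0"
proof -
  have no_terms: "{I\<in>indep_sets n E. J \<subseteq> I} = {}" using assms indep_sets_subset by blast
  show ?thesis unfolding q_poly_def no_terms by simp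
qed

context
  fixes n :: nat and E :: "nat \<Rightarrow> nat \<Rightarrow> bool"
  assumes graph: "graph_on n E"
begin

lemma singleton_indep_sets: "v < n \<Longrightarrow> {v} \<in> indep_sets n E"
  using graph unfolding indep_sets_def graph_on_def by auto

lemma union_indep_sets:
  assumes J: "J \<in> indep_sets n E" and K: "K \<in> indep_sets n E" and "K \<inter> closed_nbh E J = {}"
  shows "J \<union> K \<in> indep_sets n E"
proof -
  have "\<not> E i j" if "i \<in> J \<union> K" "j \<in> J \<union> K" for i j
    using that J K assms(3) graph unfolding indep_sets_def closed_nbh_def graph_on_def by blast
  then show ?thesis using J K unfolding indep_sets_def by blast
qed

lemma sum_indep_sets_between:
  assumes J: "J \<in> indep_sets n E" and "J \<subseteq> T" and T: "T \<subseteq> {..<n}"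
  shows "(\<Sum>I\<in>{I\<in>indep_sets n E. J \<subseteq> I \<and> I \<subseteq> T}. (-1) ^ card (I - J) * (\<Prod>i\<in>I. p i))
        = (\<Prod>i\<in>J. p i) * q_breve n E (T - closed_nbh E J) p"
proof -
  let ?A = "{K\<in>indep_sets n E. K \<subseteq> T - closed_nbh E J}"
  let ?B = "{I\<in>indep_sets n E. J \<subseteq> I \<and> I \<subseteq> T}"
  have "bij_betw (\<lambda>K. J \<union> K) ?A ?B"
  proof (rule bij_betw_byWitness[where f' = "\<lambda>I. I - J"])
    show "\<forall>K\<in>?A. J \<union> K - J = K" "\<forall>I\<in>?B. J \<union> (I - J) = I"
      unfolding closed_nbh_def by blast+
    show "(\<lambda>K. J \<union> K) ` ?A \<subseteq> ?B"
      using union_indep_sets[OF J] \<open>J \<subseteq> T\<close> by blast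
    have "I - J \<in> ?A" if I: "I \<in> indep_sets n E" "J \<subseteq> I" "I \<subseteq> T" for I
    proof -
      have "I - J \<subseteq> T - closed_nbh E J"
        using I unfolding indep_sets_def closed_nbh_def by blast
      then show ?thesis using indep_sets_subset[OF I(1)] by blast
    qed
    then show "(\<lambda>I. I - J) ` ?B \<subseteq> ?A" by blast
  qed
  then have "(\<Sum>I\<in>?B. (-1) ^ card (I - J) * (\<Prod>i\<in>I. p i))
      = (\<Sum>K\<in>?A. (-1) ^ card (J \<union> K - J) * (\<Prod>i\<in>J \<union> K. p i))"
    by (rule sum.reindex_bij_betw[symmetric])
  also have "\<dots> = (\<Sum>K\<in>?A. (\<Prod>i\<in>J. p i) * ((-1) ^ card K * (\<Prod>i\<in>K. p i)))"
  proof (rule sum.cong[OF refl])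
    fix K assume K: "K \<in> ?A"
    then have disj: "J \<inter> K = {}" and diff: "J \<union> K - J = K"
      unfolding closed_nbh_def by blast+
    have "(\<Prod>i\<in>J \<union> K. p i) = (\<Prod>i\<in>J. p i) * (\<Prod>i\<in>K. p i)"
      using J K disj indep_sets_finite by (intro prod.union_disjoint) auto
    then show "(-1) ^ card (J \<union> K - J) * (\<Prod>i\<in>J \<union> K. p i)
        = (\<Prod>i\<in>J. p i) * ((-1) ^ card K * (\<Prod>i\<in>K. p i))"
      unfolding diff by simp
  qed
  also have "\<dots> = (\<Prod>i\<in>J. p i) * q_breve n E (T - closed_nbh E J) p"
    unfolding q_breve_def by (simp add: sum_distrib_left)
  finally show ?thesis .
qed

lemma q_poly_eq_q_breve:
  assumes "J \<in> indep_sets n E"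
  shows "q_poly n E J p = (\<Prod>i\<in>J. p i) * q_breve n E ({..<n} - closed_nbh E J) p"
proof -
  have "{I\<in>indep_sets n E. J \<subseteq> I} = {I\<in>indep_sets n E. J \<subseteq> I \<and> I \<subseteq> {..<n}}"
    unfolding indep_sets_def by auto
  then show ?thesis
    using sum_indep_sets_between[OF assms] assms unfolding q_poly_def indep_sets_def by auto
qed

lemma q_poly_empty: "q_poly n E {} p = q_breve n E {..<n} p"
  using q_poly_eq_q_breve[of "{}"] by (simp add: indep_sets_def closed_nbh_def)

lemma q_breve_remove_vertex:
  assumes v: "v \<in> T" and T: "T \<subseteq> {..<n}"
  shows "q_breve n E T p = q_breve n E (T - {v}) p - p v * q_breve n E (T - closed_nbh E {v}) p"
proof -
  let ?g = "\<lambda>I. (-1::real) ^ card I * (\<Prod>i\<in>I. p i)"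
  let ?A = "{I\<in>indep_sets n E. I \<subseteq> T - {v}}"
  let ?B = "{I\<in>indep_sets n E. {v} \<subseteq> I \<and> I \<subseteq> T}"
  have split: "{I\<in>indep_sets n E. I \<subseteq> T} = ?A \<union> ?B" by blast
  have "finite (?A \<union> ?B)"
    unfolding split[symmetric] by (rule finite_subset[of _ "Pow {..<n}"]) (use T in auto)
  then have "q_breve n E T p = sum ?g ?A + sum ?g ?B"
    unfolding q_breve_def split by (intro sum.union_disjoint) auto
  moreover have "sum ?g ?B = - (\<Sum>I\<in>?B. (-1) ^ card (I - {v}) * (\<Prod>i\<in>I. p i))"
    unfolding sum_negf[symmetric]
  proof (rule sum.cong[OF refl])
    fix I assume "I \<in> ?B"
    then have "card I = Suc (card (I - {v}))"
      using indep_sets_finite card_Suc_Diff1 by fastforce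
    then show "?g I = - ((-1) ^ card (I - {v}) * (\<Prod>i\<in>I. p i))" by simp
  qed
  moreover have "(\<Sum>I\<in>?B. (-1) ^ card (I - {v}) * (\<Prod>i\<in>I. p i))
      = p v * q_breve n E (T - closed_nbh E {v}) p"
    using sum_indep_sets_between[OF singleton_indep_sets, of v T] v T by auto
  ultimately show ?thesis unfolding q_breve_def by simp
qed

end

context
  fixes n :: nat and E :: "nat \<Rightarrow> nat \<Rightarrow> bool" and p :: "nat \<Rightarrow> real"
  assumes graph: "graph_on n E" and shearer: "p \<in> shearer_region n E"
begin

abbreviation Q :: "nat set \<Rightarrow> real" where
  "Q T \<equiv> q_breve n E T p"

lemma shearer_pos: "i < n \<Longrightarrow> p i > 0"
  using shearer unfolding shearer_region_def by blast

lemma q_breve_pos: "T \<subseteq> {..<n} \<Longrightarrow> Q T > 0"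
  using shearer unfolding shearer_region_def by blast

lemma q_breve_nonneg: "T \<subseteq> {..<n} \<Longrightarrow> Q T \<ge> 0"
  by (rule less_imp_le[OF q_breve_pos])

lemma q_breve_union_le:
  assumes "finite Z" "T \<union> Z \<subseteq> {..<n}"
  shows "Q (T \<union> Z) \<le> Q T"
  using assms
proof (induction Z rule: finite_induct)
  case (insert z Z)
  show ?case
  proof (cases "z \<in> T \<union> Z")
    case False
    have "0 < p z * Q (T \<union> insert z Z - closed_nbh E {z})"
      using insert.prems by (intro mult_pos_pos shearer_pos q_breve_pos) auto
    then have "Q (T \<union> insert z Z) \<le> Q (T \<union> insert z Z - {z})"
      using q_breve_remove_vertex[OF graph, of z "T \<union> insert z Z" p] insert.prems by simp
    also have "T \<union> insert z Z - {z} = T \<union> Z" using False by auto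
    finally show ?thesis using insert by auto
  qed (use insert in \<open>auto simp: insert_absorb\<close>)
qed simp

text \<open>The ratio \<open>Q (T \<union> {w}) / Q T\<close> is antitone in \<open>T\<close>; stated without division.\<close>

lemma q_breve_insert_ratio_antimono:
  assumes "X \<subseteq> {..<n}" "Y \<subseteq> X" "w < n" "w \<notin> X"
  shows "Q (insert w X) * Q Y \<le> Q (insert w Y) * Q X"
proof -
  have "finite X" using assms(1) finite_subset by blast
  then show ?thesis using assms
  proof (induction X arbitrary: Y rule: finite_psubset_induct)
    case (psubset X)
    show ?case
    proof (cases "Y = X")
      case False
      then obtain u where u: "u \<in> X" "u \<notin> Y" using psubset.prems by blast
      define X0 where "X0 = X - {u}"
      have X0: "X0 \<subset> X" "X0 \<subseteq> {..<n}" "w \<notin> X0" "Y \<subseteq> X0"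
        using u psubset.prems unfolding X0_def by auto
      have u_n: "u < n" and u_w: "u \<noteq> w" using u psubset.prems by auto
      have IH: "Q (insert w X0) * Q Y' \<le> Q (insert w Y') * Q X0" if "Y' \<subseteq> X0" for Y'
        using psubset.IH[OF X0(1)] X0 psubset.prems that by blast
      let ?C = "X0 - closed_nbh E {u}"
      have rec_X: "Q X = Q X0 - p u * Q ?C"
      proof -
        have "X - closed_nbh E {u} = ?C" unfolding X0_def closed_nbh_def by auto
        then show ?thesis
          using q_breve_remove_vertex[OF graph u(1) psubset.prems(1), of p] unfolding X0_def by simp
      qed
      have rec_wX: "Q (insert w X) = Q (insert w X0) - p u * Q (insert w X - closed_nbh E {u})"
      proof -
        have "insert w X - {u} = insert w X0" using u_w unfolding X0_def by auto
        then show ?thesis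
          using q_breve_remove_vertex[OF graph, of u "insert w X" p] u psubset.prems by simp
      qed
      have p_u: "p u > 0" using shearer_pos[OF u_n] .
      have Q_C: "Q ?C > 0" using X0(2) by (intro q_breve_pos) blast
      have step: "Q (insert w X) * Q X0 \<le> Q (insert w X0) * Q X"
      proof (cases "E u w")
        case True
        then have "insert w X - closed_nbh E {u} = ?C"
          unfolding X0_def closed_nbh_def by auto
        moreover have "Q (insert w X0) \<le> Q X0"
          using q_breve_union_le[of "{w}" X0] X0(2) psubset.prems(3) by simp
        then have "p u * Q ?C * Q (insert w X0) \<le> p u * Q ?C * Q X0"
          using p_u Q_C by (intro mult_left_mono) auto
        ultimately show ?thesis unfolding rec_X rec_wX by (simp add: algebra_simps)
      next
        case False
        then have "insert w X - closed_nbh E {u} = insert w ?C"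
          using u_w unfolding X0_def closed_nbh_def by auto
        moreover have "p u * (Q (insert w X0) * Q ?C) \<le> p u * (Q (insert w ?C) * Q X0)"
          using IH[of ?C] p_u by (intro mult_left_mono) auto
        ultimately show ?thesis unfolding rec_X rec_wX by (simp add: algebra_simps)
      qed
      have pos: "Q X0 > 0" "Q X \<ge> 0" "Q Y \<ge> 0"
        using q_breve_pos[OF X0(2)] q_breve_nonneg[OF psubset.prems(1)]
          q_breve_nonneg[OF subset_trans[OF X0(4,2)]] by auto
      have "Q (insert w X) * Q Y * Q X0 \<le> Q (insert w X0) * Q Y * Q X"
        using mult_right_mono[OF step pos(3)] by (simp add: algebra_simps)
      also have "\<dots> \<le> Q (insert w Y) * Q X0 * Q X"
        using mult_right_mono[OF IH[OF X0(4)] pos(2)] .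
      finally show ?thesis
        using pos(1) by (simp add: algebra_simps)
    qed (simp add: mult.commute)
  qed
qed

lemma q_breve_union_ratio_antimono:
  assumes "finite Z" "Z \<inter> X = {}" "Y \<subseteq> X" "X \<union> Z \<subseteq> {..<n}"
  shows "Q (X \<union> Z) * Q Y \<le> Q (Y \<union> Z) * Q X"
  using assms
proof (induction Z rule: finite_induct)
  case (insert z Z)
  have IH: "Q (X \<union> Z) * Q Y \<le> Q (Y \<union> Z) * Q X" using insert by auto
  have step: "Q (insert z (X \<union> Z)) * Q (Y \<union> Z) \<le> Q (insert z (Y \<union> Z)) * Q (X \<union> Z)"
    by (rule q_breve_insert_ratio_antimono) (use insert in auto)
  have pos: "Q (X \<union> Z) > 0" "Q X \<ge> 0" "Q (insert z (X \<union> Z)) \<ge> 0"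
    using insert.prems by (auto intro: q_breve_pos q_breve_nonneg)
  have "Q (insert z (X \<union> Z)) * Q Y * Q (X \<union> Z) \<le> Q (insert z (X \<union> Z)) * (Q (Y \<union> Z) * Q X)"
    using mult_left_mono[OF IH pos(3)] by (simp add: algebra_simps)
  also have "\<dots> \<le> Q (insert z (Y \<union> Z)) * Q (X \<union> Z) * Q X"
    using mult_right_mono[OF step pos(2)] by (simp add: algebra_simps)
  finally show ?case
    using pos(1) by (simp add: algebra_simps)
qed (simp add: mult.commute)

lemma q_breve_inter_mult_le:
  assumes A: "A \<subseteq> {..<n}" and B: "B \<subseteq> {..<n}"
  shows "Q (A \<inter> B) * Q {..<n} \<le> Q A * Q B"
proof -
  have "Q (A \<union> (B - A)) * Q (A \<inter> B) \<le> Q (A \<inter> B \<union> (B - A)) * Q A"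
    using finite_subset[OF B] A B by (intro q_breve_union_ratio_antimono) auto
  moreover have "A \<union> (B - A) = A \<union> B" "A \<inter> B \<union> (B - A) = B" by auto
  ultimately have "Q (A \<union> B) * Q (A \<inter> B) \<le> Q A * Q B" by (simp only: mult.commute)
  moreover have "Q {..<n} * Q (A \<inter> B) \<le> Q (A \<union> B) * Q (A \<inter> B)"
  proof (rule mult_right_mono)
    have "(A \<union> B) \<union> ({..<n} - (A \<union> B)) = {..<n}" using A B by auto
    then show "Q {..<n} \<le> Q (A \<union> B)"
      using q_breve_union_le[of "{..<n} - (A \<union> B)" "A \<union> B"] by simp
    show "Q (A \<inter> B) \<ge> 0" using A by (intro q_breve_nonneg) blast
  qed
  ultimately show ?thesis by (simp only: mult.commute)
qed

lemma q_poly_empty_pos: "q_poly n E {} p > 0"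
  using q_poly_empty[OF graph] q_breve_pos by simp

lemma q_poly_singleton_pos: "j < n \<Longrightarrow> q_poly n E {j} p > 0"
  using q_poly_eq_q_breve[OF graph singleton_indep_sets[OF graph]] shearer_pos
    q_breve_pos[of "{..<n} - closed_nbh E {j}"] by auto

lemma q_poly_insert_mult_le:
  assumes J: "insert k J \<in> indep_sets n E" and "k \<notin> J"
  shows "q_poly n E (insert k J) p * q_poly n E {} p \<le> q_poly n E {k} p * q_poly n E J p"
proof -
  let ?U = "{..<n}"
  have J0: "J \<in> indep_sets n E" using J indep_sets_subset by blast
  then have "finite J" by (rule indep_sets_finite)
  have k: "k < n" using J unfolding indep_sets_def by auto
  have "?U - closed_nbh E (insert k J) = (?U - closed_nbh E J) \<inter> (?U - closed_nbh E {k})"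
    unfolding closed_nbh_def by auto
  then have "Q (?U - closed_nbh E (insert k J)) * Q ?U
      \<le> Q (?U - closed_nbh E J) * Q (?U - closed_nbh E {k})"
    using q_breve_inter_mult_le by auto
  moreover have "(\<Prod>i\<in>insert k J. p i) \<ge> 0"
  proof (rule prod_nonneg)
    show "0 \<le> p i" if "i \<in> insert k J" for i
      using that J shearer_pos[of i] unfolding indep_sets_def by auto
  qed
  ultimately have "(\<Prod>i\<in>insert k J. p i) * (Q (?U - closed_nbh E (insert k J)) * Q ?U)
      \<le> (\<Prod>i\<in>insert k J. p i) * (Q (?U - closed_nbh E J) * Q (?U - closed_nbh E {k}))"
    by (rule mult_left_mono)
  then show ?thesis
    unfolding q_poly_eq_q_breve[OF graph J] q_poly_eq_q_breve[OF graph J0]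
      q_poly_eq_q_breve[OF graph singleton_indep_sets[OF graph k]] q_poly_empty[OF graph]
    using \<open>finite J\<close> \<open>k \<notin> J\<close> by (simp add: algebra_simps)
qed

lemma q_poly_ratio_le_prod:
  assumes "J \<in> indep_sets n E"
  shows "q_poly n E J p / q_poly n E {} p \<le> (\<Prod>j\<in>J. q_poly n E {j} p / q_poly n E {} p)"
  using indep_sets_finite[OF assms] assms
proof (induction J rule: finite_induct)
  case (insert k J)
  have J: "J \<in> indep_sets n E" and k: "k < n"
    using insert.prems indep_sets_subset unfolding indep_sets_def by auto
  have q0: "q_poly n E {} p > 0" by (rule q_poly_empty_pos)
  have "q_poly n E (insert k J) p / q_poly n E {} p
      \<le> (q_poly n E {k} p / q_poly n E {} p) * (q_poly n E J p / q_poly n E {} p)"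
    using q_poly_insert_mult_le[OF insert.prems insert.hyps(2)] q0 by (simp add: field_simps)
  also have "\<dots> \<le> (q_poly n E {k} p / q_poly n E {} p) * (\<Prod>j\<in>J. q_poly n E {j} p / q_poly n E {} p)"
    by (rule mult_left_mono[OF insert.IH[OF J]]) (use q_poly_singleton_pos[OF k] q0 in simp)
  finally show ?case using insert.hyps by simp
qed (simp add: q_poly_empty_pos)

end

theorem mainTheorem12:
  fixes n :: nat and E :: "nat \<Rightarrow> nat \<Rightarrow> bool" and p :: "nat \<Rightarrow> real" and S :: "nat set"
  assumes "graph_on n E"
    and "p \<in> shearer_region n E"
    and "S \<subseteq> {..<n}"
  shows "(\<Sum>J\<in>Pow S. q_poly n E J p / q_poly n E {} p)
           \<le> (\<Prod>j\<in>S. 1 + q_poly n E {j} p / q_poly n E {} p)"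
proof -
  let ?r = "\<lambda>j. q_poly n E {j} p / q_poly n E {} p"
  have r_nonneg: "?r j \<ge> 0" if "j \<in> S" for j
    using that assms q_poly_singleton_pos q_poly_empty_pos by fastforce
  have expand: "(\<Prod>j\<in>S. 1 + ?r j) = (\<Sum>J\<in>Pow S. \<Prod>j\<in>J. ?r j)"
    using prod_add[of S ?r "\<lambda>_. 1"] finite_subset[OF assms(3)] by (simp add: add.commute)
  have bound: "q_poly n E J p / q_poly n E {} p \<le> (\<Prod>j\<in>J. ?r j)" if "J \<in> Pow S" for J
  proof (cases "J \<in> indep_sets n E")
    case False
    then show ?thesis
      using q_poly_not_indep[OF False] r_nonneg that by (auto intro!: prod_nonneg)
  qed (rule q_poly_ratio_le_prod[OF assms(1,2)])
  show ?thesis unfolding expand by (rule sum_mono) (rule bound)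
qed

end
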